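(* Let $\mathbb{F}$ be a field, and let $\mathcal{C}\subseteq\mathbb{F}^N$ be a systematic linear code of dimension $n$ which is an $(s,t)$-batch code, where $1\le s\le t$. Then for every integer $u$ with $1\le u\le s$ (and $u\le n$) and every integer $v$ with $1\le v\le \lfloor t/u\rfloor-1$, the code $\mathcal{C}$ is a $(u,v)$-ordered-batch code.
   Context: For a positive integer $m$, $[m]=\{1,\dots,m\}$. A linear code $\mathcal{C}\subseteq\mathbb{F}^N$ of dimension $n$ is systematic if for every $\mathbf{x}\in\mathbb{F}^n$ there is a unique codeword whose first $n$ coordinates equal $\mathbf{x}$ (coordinates $1,\dots,n$ are the information symbols). For $\mathbf{c}\in\mathcal{C}$ write $\mathbf{c}(i)$ for its $i$-th coordinate. A set $R\subseteq[N]$ is a recovering set for $i\in[n]$ if there are scalars $\lambda_k\in\mathbb{F}$ ($k\in R$) with $\mathbf{c}(i)=\sum_{k\in R}\lambda_k\mathbf{c}(k)$ for all $\mathbf{c}\in\mathcal{C}$. $(s,t)$-batch code ($1\le s\le t$): a systematic linear code $\mathcal{C}\subseteq\mathbb{F}^N$ of dimension $n$ such that for every choice of indices $i_1,\dots,i_s\in[n]$ (not necessarily distinct) and nonnegative integers $a_1,\dots,a_s$ with $\sum_{j=1}^s a_j=t$, there exist $t$ pairwise disjoint sets $R_{j,l}\subseteq[N]$ ($j\in[s]$, $l\in[a_j]$) such that each $R_{j,l}$ is a recovering set for $i_j$. $(u,v)$-ordered-batch code ($u,v$ positive integers): a systematic linear code $\mathcal{C}\subseteq\mathbb{F}^N$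 of dimension $n$ such that for every set $I=\{i_1,\dots,i_u\}\subseteq[n]$ of $u$ distinct indices there exist $uv$ pairwise disjoint sets $R_{j,l}\subseteq[N]$ ($j\in[u]$, $l\in[v]$), each $R_{j,l}$ a recovering set for $i_j$, such that the directed graph $D_I$ with vertex set $I$ and an arc $i_j\to i_k$ (for $j,k\in[u]$, $j=k$ allowed, giving a loop) whenever $i_k\in\bigcup_{l=1}^{v}R_{j,l}$, is acyclic (has no directed cycles, in particular no loops). *)

theory Defs
  imports Main
begin

text \<open>Vectors of F^N are modelled as functions nat => 'a that vanish outside the
coordinate set {1..N}. A code is a set of such vectors.\<close>

definition linear_code :: "nat \<Rightarrow> (nat \<Rightarrow> 'a::field) set \<Rightarrow> bool" where
  "linear_code N C \<longleftrightarrow>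
     (\<forall>c\<in>C. \<forall>k. k \<notin> {1..N} \<longrightarrow> c k = 0) \<and>
     (\<lambda>_. 0) \<in> C \<and>
     (\<forall>c\<in>C. \<forall>d\<in>C. (\<lambda>k. c k + d k) \<in> C) \<and>
     (\<forall>a. \<forall>c\<in>C. (\<lambda>k. a * c k) \<in> C)"

definition systematic_code :: "nat \<Rightarrow> nat \<Rightarrow> (nat \<Rightarrow> 'a::field) set \<Rightarrow> bool" where
  "systematic_code N n C \<longleftrightarrow> linear_code N C \<and> n \<le> N \<and>
     (\<forall>x :: nat \<Rightarrow> 'a. \<exists>!c. c \<in> C \<and> (\<forall>i\<in>{1..n}. c i = x i))"

definition recovering_set :: "nat \<Rightarrow> (nat \<Rightarrow> 'a::field) set \<Rightarrow> nat set \<Rightarrow> nat \<Rightarrow> bool" where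
  "recovering_set N C R i \<longleftrightarrow> R \<subseteq> {1..N} \<and>
     (\<exists>lam :: nat \<Rightarrow> 'a. \<forall>c\<in>C. c i = (\<Sum>k\<in>R. lam k * c k))"

definition batch_code :: "nat \<Rightarrow> nat \<Rightarrow> (nat \<Rightarrow> 'a::field) set \<Rightarrow> nat \<Rightarrow> nat \<Rightarrow> bool" where
  "batch_code N n C s t \<longleftrightarrow> systematic_code N n C \<and>
     (\<forall>(ind :: nat \<Rightarrow> nat) (a :: nat \<Rightarrow> nat).
        (\<forall>j\<in>{1..s}. ind j \<in> {1..n}) \<and> (\<Sum>j=1..s. a j) = t \<longrightarrow>
        (\<exists>R :: nat \<times> nat \<Rightarrow> nat set.
           (\<forall>j\<in>{1..s}. \<forall>l\<in>{1..a j}. recovering_set N C (R (j, l)) (ind j)) \<and>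
           (\<forall>p\<in>{(j, l). j \<in> {1..s} \<and> l \<in> {1..a j}}.
              \<forall>q\<in>{(j, l). j \<in> {1..s} \<and> l \<in> {1..a j}}.
                p \<noteq> q \<longrightarrow> R p \<inter> R q = {})))"

definition ordered_batch_code :: "nat \<Rightarrow> nat \<Rightarrow> (nat \<Rightarrow> 'a::field) set \<Rightarrow> nat \<Rightarrow> nat \<Rightarrow> bool" where
  "ordered_batch_code N n C u v \<longleftrightarrow> systematic_code N n C \<and>
     (\<forall>ind :: nat \<Rightarrow> nat.
        inj_on ind {1..u} \<and> ind ` {1..u} \<subseteq> {1..n} \<longrightarrow>
        (\<exists>R :: nat \<times> nat \<Rightarrow> nat set.
           (\<forall>j\<in>{1..u}. \<forall>l\<in>{1..v}. recovering_set N C (R (j, l)) (ind j)) \<and>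
           (\<forall>p\<in>{1..u} \<times> {1..v}. \<forall>q\<in>{1..u} \<times> {1..v}. p \<noteq> q \<longrightarrow> R p \<inter> R q = {}) \<and>
           acyclic {(ind j, ind k) | j k. j \<in> {1..u} \<and> k \<in> {1..u} \<and>
                      ind k \<in> (\<Union>l\<in>{1..v}. R (j, l))}))"

end

theory Submission
  imports Defs
begin

text \<open>Request each of the u indices v+1 times (feasible since u(v+1) \<le> t) and let x \<rightarrow> y
whenever y lies in one of the sets recovering x. Disjointness of the recovering sets gives every
vertex in-degree at most one, so the vertices of a cycle form a strongly connected class of their
own. If x is the unique predecessor of the least vertex m of such a class, x discards the set
containing m; this removes an edge from every cycle, and v sets per index remain.\<close>

definition cycle_min :: "('v::linorder \<times> 'v) set \<Rightarrow> 'v \<Rightarrow> bool" where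
  "cycle_min E m \<longleftrightarrow> (m, m) \<in> E\<^sup>+ \<and> (\<forall>y. (y, m) \<in> E\<^sup>+ \<and> (m, y) \<in> E\<^sup>+ \<longrightarrow> m \<le> y)"

lemma in_degree_le_one_rtrancl_into_cycle:
  assumes in_deg: "single_valued (converse E)" and "G \<subseteq> E"
    and cycle: "(x, x) \<in> G\<^sup>+" and "(y, x) \<in> E\<^sup>*"
  shows "(y, x) \<in> G\<^sup>* \<and> (x, y) \<in> G\<^sup>*"
  using \<open>(y, x) \<in> E\<^sup>*\<close>
proof (induction rule: converse_rtrancl_induct)
  case base
  show ?case by simp
next
  case (step y z)
  then have zx: "(z, x) \<in> G\<^sup>*" and xz: "(x, z) \<in> G\<^sup>*" by auto
  have "(z, z) \<in> G\<^sup>+"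
    using rtrancl_trancl_trancl[OF zx cycle] xz by (rule trancl_rtrancl_trancl)
  then obtain w where zw: "(z, w) \<in> G\<^sup>*" and wz: "(w, z) \<in> G"
    using tranclD2 by metis
  have "(w, z) \<in> E"
    using wz \<open>G \<subseteq> E\<close> by blast
  then have "w = y"
    using single_valuedD[OF in_deg] step.hyps(1) by blast
  with wz zx zw xz show ?case
    using converse_rtrancl_into_rtrancl rtrancl_trans by metis
qed

lemma acyclic_delete_edges_into_cycle_min:
  fixes E :: "('v::linorder \<times> 'v) set"
  assumes "finite E" and in_deg: "single_valued (converse E)"
  shows "acyclic {(p, m). (p, m) \<in> E \<and> \<not> cycle_min E m}"
    (is "acyclic ?G")
  unfolding acyclic_def
proof (intro allI notI)
  fix x
  assume x_cycle: "(x, x) \<in> ?G\<^sup>+"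
  have GE: "?G \<subseteq> E" by auto
  define K where "K = {y. (y, x) \<in> E\<^sup>+ \<and> (x, y) \<in> E\<^sup>+}"
  have "K \<subseteq> Domain (E\<^sup>+)"
    unfolding K_def by blast
  then have "finite K"
    using \<open>finite E\<close> by (metis finite_Domain finite_subset trancl_domain)
  moreover have "x \<in> K"
    using trancl_mono[OF x_cycle GE] unfolding K_def by simp
  ultimately have mK: "Min K \<in> K" and m_le: "\<And>y. y \<in> K \<Longrightarrow> Min K \<le> y"
    by (auto intro: Min_in)
  define m where "m = Min K"
  have mx: "(m, x) \<in> E\<^sup>+" and xm: "(x, m) \<in> E\<^sup>+"
    using mK unfolding K_def m_def by auto
  from in_degree_le_one_rtrancl_into_cycle[OF in_deg GE x_cycle trancl_into_rtrancl[OF mx]]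
  have mx_G: "(m, x) \<in> ?G\<^sup>*" and xm_G: "(x, m) \<in> ?G\<^sup>*"
    by auto
  have m_cycle: "(m, m) \<in> ?G\<^sup>+"
    using rtrancl_trancl_trancl[OF mx_G x_cycle] xm_G by (rule trancl_rtrancl_trancl)
  obtain p where "(p, m) \<in> ?G"
    using tranclD2[OF m_cycle] by blast
  moreover have "cycle_min E m"
    unfolding cycle_min_def
  proof (intro conjI allI impI)
    show "(m, m) \<in> E\<^sup>+"
      using trancl_mono[OF m_cycle GE] .
    fix y
    assume "(y, m) \<in> E\<^sup>+ \<and> (m, y) \<in> E\<^sup>+"
    then have "(y, x) \<in> E\<^sup>+" "(x, y) \<in> E\<^sup>+"
      using trancl_trans[of y m E x] trancl_trans[of x m E y] mx xm by auto
    then show "m \<le> y"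
      using m_le unfolding K_def m_def by blast
  qed
  ultimately show False
    by blast
qed

lemma cycle_min_unique_successor:
  assumes in_deg: "single_valued (converse E)"
    and "(p, m) \<in> E" "cycle_min E m" and "(p, m') \<in> E" "cycle_min E m'"
  shows "m = m'"
proof -
  have "(m, p) \<in> E\<^sup>*" if "(p, m) \<in> E" "cycle_min E m" for m
  proof -
    obtain q where "(m, q) \<in> E\<^sup>*" "(q, m) \<in> E"
      using \<open>cycle_min E m\<close> tranclD2 unfolding cycle_min_def by metis
    moreover have "q = p"
      using in_deg \<open>(q, m) \<in> E\<close> \<open>(p, m) \<in> E\<close> by (auto simp: single_valued_def)
    ultimately show ?thesis by simp
  qed
  then have "(m, m') \<in> E\<^sup>+" "(m', m) \<in> E\<^sup>+"
    using assms by (auto intro: rtrancl_into_trancl1)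
  then show ?thesis
    using \<open>cycle_min E m\<close> \<open>cycle_min E m'\<close> unfolding cycle_min_def by (auto intro: antisym)
qed

lemma in_degree_le_one_delete_one_label_acyclic:
  fixes E :: "('v::linorder \<times> 'v) set" and lab :: "'v \<Rightarrow> 'v \<Rightarrow> 'l"
  assumes "finite E" and in_deg: "single_valued (converse E)"
  shows "\<exists>d. acyclic {(a, b). (a, b) \<in> E \<and> lab a b \<noteq> d a}"
proof -
  define d where "d p = lab p (SOME m. (p, m) \<in> E \<and> cycle_min E m)" for p
  have "lab a b = d a" if "(a, b) \<in> E" "cycle_min E b" for a b
  proof -
    have "(SOME m. (a, m) \<in> E \<and> cycle_min E m) = b"
      by (rule some_equality) (use that cycle_min_unique_successor[OF in_deg] in blast)+
    then show ?thesis
      unfolding d_def by simp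
  qed
  then have "{(a, b). (a, b) \<in> E \<and> lab a b \<noteq> d a} \<subseteq> {(p, m). (p, m) \<in> E \<and> \<not> cycle_min E m}"
    by auto
  with acyclic_delete_edges_into_cycle_min[OF assms]
  have "acyclic {(a, b). (a, b) \<in> E \<and> lab a b \<noteq> d a}"
    by (rule acyclic_subset)
  then show ?thesis by blast
qed

lemma batch_code_repeated_requests:
  assumes batch: "batch_code N n C s t"
    and "1 \<le> u" "u \<le> s" "u * w \<le> t" and ind: "ind ` {1..u} \<subseteq> {1..n}"
  shows "\<exists>R. (\<forall>j\<in>{1..u}. \<forall>l\<in>{1..w}. recovering_set N C (R (j, l)) (ind j)) \<and>
             (\<forall>p\<in>{1..u} \<times> {1..w}. \<forall>q\<in>{1..u} \<times> {1..w}. p \<noteq> q \<longrightarrow> R p \<inter> R q = {})"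
proof -
  \<comment> \<open>The surplus requests t - u w are all made for the first index.\<close>
  define a where "a j = (if j \<in> {1..u} then w else 0) + (if j = 1 then t - u * w else 0)" for j
  define ind' where "ind' j = (if j \<le> u then ind j else ind 1)" for j
  have "(\<Sum>j=1..s. if j \<in> {1..u} then w else 0) = (\<Sum>j\<in>{1..s} \<inter> {1..u}. w)"
    by (rule sum.inter_restrict[symmetric]) simp
  also have "\<dots> = u * w"
    using \<open>u \<le> s\<close> by (simp add: Int_absorb1)
  moreover have "(\<Sum>j=1..s. if j = 1 then t - u * w else 0) = t - u * w"
    using \<open>1 \<le> u\<close> \<open>u \<le> s\<close> by simp
  ultimately have "(\<Sum>j=1..s. a j) = u * w + (t - u * w)"
    by (simp add: a_def sum.distrib)
  with \<open>u * w \<le> t\<close> have "(\<Sum>j=1..s. a j) = t" by simp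
  moreover have "\<forall>j\<in>{1..s}. ind' j \<in> {1..n}"
    using ind \<open>1 \<le> u\<close> unfolding ind'_def by (auto simp: image_subset_iff)
  ultimately obtain R
    where rec: "\<forall>j\<in>{1..s}. \<forall>l\<in>{1..a j}. recovering_set N C (R (j, l)) (ind' j)"
      and disj: "\<forall>p\<in>{(j, l). j \<in> {1..s} \<and> l \<in> {1..a j}}.
                   \<forall>q\<in>{(j, l). j \<in> {1..s} \<and> l \<in> {1..a j}}. p \<noteq> q \<longrightarrow> R p \<inter> R q = {}"
    using batch unfolding batch_code_def by blast
  have requested: "{1..u} \<times> {1..w} \<subseteq> {(j, l). j \<in> {1..s} \<and> l \<in> {1..a j}}"
    using \<open>u \<le> s\<close> by (auto simp: a_def)
  show ?thesis
  proof (intro exI[of _ R] conjI ballI impI)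
    fix j l
    assume "j \<in> {1..u}" "l \<in> {1..w}"
    with requested rec have "recovering_set N C (R (j, l)) (ind' j)"
      by blast
    with \<open>j \<in> {1..u}\<close> show "recovering_set N C (R (j, l)) (ind j)"
      by (simp add: ind'_def)
  next
    fix p q
    assume "p \<in> {1..u} \<times> {1..w}" "q \<in> {1..u} \<times> {1..w}" "p \<noteq> q"
    with requested disj show "R p \<inter> R q = {}"
      by blast
  qed
qed

lemma drop_spare_set_acyclic:
  fixes ind :: "nat \<Rightarrow> nat" and R :: "nat \<times> nat \<Rightarrow> nat set"
  assumes inj: "inj_on ind {1..u}"
    and P: "\<forall>j\<in>{1..u}. \<forall>l\<in>{1..Suc v}. P j (R (j, l))"
    and disj: "\<forall>p\<in>{1..u} \<times> {1..Suc v}. \<forall>q\<in>{1..u} \<times> {1..Suc v}. p \<noteq> q \<longrightarrow> R p \<inter> R q = {}"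
  shows "\<exists>R'. (\<forall>j\<in>{1..u}. \<forall>l\<in>{1..v}. P j (R' (j, l))) \<and>
              (\<forall>p\<in>{1..u} \<times> {1..v}. \<forall>q\<in>{1..u} \<times> {1..v}. p \<noteq> q \<longrightarrow> R' p \<inter> R' q = {}) \<and>
              acyclic {(ind j, ind k) | j k. j \<in> {1..u} \<and> k \<in> {1..u} \<and>
                         ind k \<in> (\<Union>l\<in>{1..v}. R' (j, l))}"
proof -
  have same_set: "(j, l) = (j', l')"
    if "j \<in> {1..u}" "l \<in> {1..Suc v}" "j' \<in> {1..u}" "l' \<in> {1..Suc v}"
      "y \<in> R (j, l)" "y \<in> R (j', l')" for j l j' l' y
    using disj that by blast
  define E where "E = {(ind j, ind k) | j k. j \<in> {1..u} \<and> k \<in> {1..u} \<and>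
                          (\<exists>l\<in>{1..Suc v}. ind k \<in> R (j, l))}"
  define lab where "lab x y = (SOME l. \<exists>j\<in>{1..u}. x = ind j \<and> l \<in> {1..Suc v} \<and> y \<in> R (j, l))"
    for x y
  have "finite E"
    by (rule finite_subset[of _ "ind ` {1..u} \<times> ind ` {1..u}"]) (auto simp: E_def)
  moreover have "single_valued (converse E)"
  proof (rule single_valuedI)
    fix y x x'
    assume "(y, x) \<in> converse E" "(y, x') \<in> converse E"
    then obtain j l j' l' where "j \<in> {1..u}" "l \<in> {1..Suc v}" "y \<in> R (j, l)" "x = ind j"
      and "j' \<in> {1..u}" "l' \<in> {1..Suc v}" "y \<in> R (j', l')" "x' = ind j'"
      unfolding E_def by auto
    then show "x = x'"
      using same_set by blast
  qed
  ultimately obtain d where acyclic_d: "acyclic {(x, y). (x, y) \<in> E \<and> lab x y \<noteq> d x}"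
    using in_degree_le_one_delete_one_label_acyclic by blast
  \<comment> \<open>Skip the label d (ind j), mapping {1..v} injectively into {1..v+1}.\<close>
  define skip where "skip j l = (if l < d (ind j) then l else Suc l)" for j l
  have skip_range: "skip j l \<in> {1..Suc v}" if "l \<in> {1..v}" for j l
    using that by (auto simp: skip_def)
  have lab_eq: "lab (ind j) y = l" if "j \<in> {1..u}" "l \<in> {1..Suc v}" "y \<in> R (j, l)" for j l y
    unfolding lab_def
  proof (rule some_equality)
    fix l'
    assume "\<exists>j'\<in>{1..u}. ind j = ind j' \<and> l' \<in> {1..Suc v} \<and> y \<in> R (j', l')"
    then obtain j' where "j' \<in> {1..u}" "ind j = ind j'" "l' \<in> {1..Suc v}" "y \<in> R (j', l')"
      by blast
    with inj that show "l' = l"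
      using same_set by (metis inj_on_def prod.inject)
  qed (use that in blast)
  define R' where "R' p = R (fst p, skip (fst p) (snd p))" for p
  show ?thesis
  proof (intro exI[of _ R'] conjI ballI impI)
    fix j l
    assume "j \<in> {1..u}" "l \<in> {1..v}"
    then show "P j (R' (j, l))"
      using P skip_range by (auto simp: R'_def)
  next
    fix p q
    assume pq: "p \<in> {1..u} \<times> {1..v}" "q \<in> {1..u} \<times> {1..v}" "p \<noteq> q"
    obtain j l j' l' where "p = (j, l)" "q = (j', l')"
      by fastforce
    with pq have p: "p = (j, l)" "j \<in> {1..u}" "l \<in> {1..v}"
      and q: "q = (j', l')" "j' \<in> {1..u}" "l' \<in> {1..v}"
      by auto
    have "skip j l = skip j l' \<Longrightarrow> l = l'"
      by (auto simp: skip_def split: if_splits)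
    with \<open>p \<noteq> q\<close> p q have "(j, skip j l) \<noteq> (j', skip j' l')"
      by auto
    with p q disj skip_range have "R (j, skip j l) \<inter> R (j', skip j' l') = {}"
      by blast
    then show "R' p \<inter> R' q = {}"
      by (simp add: R'_def p q)
  next
    show "acyclic {(ind j, ind k) | j k. j \<in> {1..u} \<and> k \<in> {1..u} \<and>
                     ind k \<in> (\<Union>l\<in>{1..v}. R' (j, l))}"
    proof (rule acyclic_subset[OF acyclic_d], safe)
      fix j k l
      assume j: "j \<in> {1..u}" and "k \<in> {1..u}" "l \<in> {1..v}" "ind k \<in> R' (j, l)"
      then have k_in: "ind k \<in> R (j, skip j l)" and skip_l: "skip j l \<in> {1..Suc v}"
        using skip_range by (auto simp: R'_def)
      with j \<open>k \<in> {1..u}\<close> show "(ind j, ind k) \<in> E"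
        unfolding E_def by blast
      have "lab (ind j) (ind k) = skip j l"
        using lab_eq[OF j skip_l k_in] .
      then show "lab (ind j) (ind k) = d (ind j) \<Longrightarrow> False"
        by (simp add: skip_def split: if_splits)
    qed
  qed
qed

theorem proposition1:
  fixes C :: "(nat \<Rightarrow> 'a::field) set" and N n s t u v :: nat
  assumes "batch_code N n C s t"
    and "1 \<le> s" and "s \<le> t"
    and "1 \<le> u" and "u \<le> s" and "u \<le> n"
    and "1 \<le> v" and "v \<le> t div u - 1"
  shows "ordered_batch_code N n C u v"
proof -
  have "Suc v \<le> t div u"
    using assms(7,8) by linarith
  then have "u * Suc v \<le> u * (t div u)"
    by (rule mult_le_mono2)
  also have "\<dots> \<le> t" by simp
  finally have requests: "u * Suc v \<le> t" .
  have "systematic_code N n C"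
    using assms(1) unfolding batch_code_def by simp
  moreover have "\<exists>R'. (\<forall>j\<in>{1..u}. \<forall>l\<in>{1..v}. recovering_set N C (R' (j, l)) (ind j)) \<and>
      (\<forall>p\<in>{1..u} \<times> {1..v}. \<forall>q\<in>{1..u} \<times> {1..v}. p \<noteq> q \<longrightarrow> R' p \<inter> R' q = {}) \<and>
      acyclic {(ind j, ind k) | j k. j \<in> {1..u} \<and> k \<in> {1..u} \<and> ind k \<in> (\<Union>l\<in>{1..v}. R' (j, l))}"
    if inj: "inj_on ind {1..u}" and ind: "ind ` {1..u} \<subseteq> {1..n}" for ind
  proof -
    obtain R where "\<forall>j\<in>{1..u}. \<forall>l\<in>{1..Suc v}. recovering_set N C (R (j, l)) (ind j)"
      "\<forall>p\<in>{1..u} \<times> {1..Suc v}. \<forall>q\<in>{1..u} \<times> {1..Suc v}. p \<noteq> q \<longrightarrow> R p \<inter> R q = {}"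
      using batch_code_repeated_requests[OF assms(1,4,5) requests ind] by blast
    from drop_spare_set_acyclic[OF inj this] show ?thesis .
  qed
  ultimately show ?thesis
    unfolding ordered_batch_code_def by blast
qed

end
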